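(* Let $t$ be the Thue–Morse word. For every $n\geq 2$, one has $f_{aa}(n)\geq n-1$ and $f_{ab}(n)\geq n-1$.
   Context: The Thue–Morse word $t=0110100110010110\cdots$ is the fixed point starting with $0$ of the substitution $\mu:0\mapsto 01,\ 1\mapsto 10$. $f_{aa}(n)$ (resp. $f_{ab}(n)$) denotes the number of distinct factors of $t$ of length $n$ that begin and end with the same letter (resp. with different letters). *)

theory Defs
  imports Main
begin

fun mu_letter :: "nat \<Rightarrow> nat list" where
  "mu_letter a = (if a = 0 then [0, 1] else [1, 0])"

definition mu :: "nat list \<Rightarrow> nat list" where
  "mu w = concat (map mu_letter w)"

text \<open>The Thue--Morse word t, the fixed point of mu starting with 0:
  its n-th letter (0-indexed) is the n-th letter of mu^(n+1)(0), which has length 2^(n+1) > n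
  and is a prefix of all further iterates.\<close>
definition thue_morse :: "nat \<Rightarrow> nat" where
  "thue_morse n = ((mu ^^ Suc n) [0]) ! n"

definition tm_factor :: "nat \<Rightarrow> nat \<Rightarrow> nat list" where
  "tm_factor i n = map thue_morse [i..<i + n]"

definition tm_factors :: "nat \<Rightarrow> nat list set" where
  "tm_factors n = {w. \<exists>i. w = tm_factor i n}"

definition f_aa :: "nat \<Rightarrow> nat" where
  "f_aa n = card {w \<in> tm_factors n. hd w = last w}"

definition f_ab :: "nat \<Rightarrow> nat" where
  "f_ab n = card {w \<in> tm_factors n. hd w \<noteq> last w}"

end

theory Submission
  imports Defs
begin

text \<open>A factor of t of length n starting at position 2i + r (r = 0, 1) is the window
  take n (drop r (mu u)) of the image of the factor u of length m = (n + r + 1) div 2 at i,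
  and the window determines u. Its end letters agree iff those of u do, up to a flip exactly
  when n is even. For n \<ge> 4 a factor cannot occur at both an even and an odd position,
  since t has no three equal consecutive letters. Hence the number of factors of length n
  with (un)equal ends is at least the sum of the corresponding counts for lengths
  (n + 1) div 2 and (n + 2) div 2, and the bound n - 1 follows by induction from n = 2, 3.\<close>

lemma card_le_of_disjoint_images:
  assumes "finite C" "inj_on f A" "inj_on g B" "f ` A \<union> g ` B \<subseteq> C" "f ` A \<inter> g ` B = {}"
  shows "card A + card B \<le> card C"
proof -
  have "finite (f ` A)" "finite (g ` B)"
    using assms(1,4) finite_subset by blast+
  then have "card A + card B = card (f ` A \<union> g ` B)"
    using assms(2,3,5) by (simp add: card_Un_disjoint card_image)
  also have "\<dots> \<le> card C"
    using assms(1,4) by (rule card_mono)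
  finally show ?thesis .
qed

fun thue_morse_rec :: "nat \<Rightarrow> nat" where
  "thue_morse_rec n =
     (if n = 0 then 0 else if even n then thue_morse_rec (n div 2) else 1 - thue_morse_rec (n div 2))"

declare thue_morse_rec.simps [simp del]

lemma thue_morse_rec_le_1: "thue_morse_rec n \<le> 1"
  by (induction n rule: thue_morse_rec.induct) (subst thue_morse_rec.simps, auto)

lemma mu_letter_thue_morse_rec: "mu_letter (thue_morse_rec n) = [thue_morse_rec n, 1 - thue_morse_rec n]"
  using thue_morse_rec_le_1[of n] by (cases "thue_morse_rec n") auto

lemma mu_thue_morse_rec_prefix: "mu (map thue_morse_rec [0..<n]) = map thue_morse_rec [0..<2 * n]"
proof (induction n)
  case (Suc n)
  have "thue_morse_rec (2 * n) = thue_morse_rec n" "thue_morse_rec (Suc (2 * n)) = 1 - thue_morse_rec n"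
    by (cases "n = 0") (simp_all add: thue_morse_rec.simps[of "2 * n"] thue_morse_rec.simps[of "Suc (2 * n)"])
  with Suc show ?case
    by (simp add: mu_def mu_letter_thue_morse_rec del: mu_letter.simps)
qed (simp add: mu_def)

lemma thue_morse_eq_rec: "thue_morse n = thue_morse_rec n"
proof -
  have "(mu ^^ m) [0] = map thue_morse_rec [0..<2 ^ m]" for m
    by (induction m) (simp_all add: thue_morse_rec.simps[of 0] mu_thue_morse_rec_prefix)
  moreover have "n < 2 ^ Suc n"
    using less_exp[of "Suc n"] by simp
  ultimately show ?thesis
    unfolding thue_morse_def by (simp del: funpow.simps)
qed

lemma thue_morse_0 [simp]: "thue_morse 0 = 0"
  by (simp add: thue_morse_eq_rec thue_morse_rec.simps[of 0])

lemma thue_morse_le_1: "thue_morse n \<le> 1"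
  using thue_morse_rec_le_1[of n] by (simp add: thue_morse_eq_rec)

lemma thue_morse_double [simp]: "thue_morse (2 * n) = thue_morse n"
  by (cases "n = 0") (simp_all add: thue_morse_eq_rec thue_morse_rec.simps[of "2 * n"])

lemma thue_morse_Suc_double [simp]: "thue_morse (Suc (2 * n)) = 1 - thue_morse n"
  by (simp add: thue_morse_eq_rec thue_morse_rec.simps[of "Suc (2 * n)"])

lemma thue_morse_small:
  "thue_morse 2 = 1" "thue_morse 3 = 0" "thue_morse 4 = 1" "thue_morse 5 = 0" "thue_morse 6 = 0"
  "thue_morse 7 = 1"
  using thue_morse_Suc_double[of 0] thue_morse_double[of 1] thue_morse_Suc_double[of 1]
    thue_morse_double[of 2] thue_morse_Suc_double[of 2] thue_morse_double[of 3] thue_morse_Suc_double[of 3]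
  by (simp_all add: eval_nat_numeral)

lemma thue_morse_double_neq: "thue_morse (2 * m) \<noteq> thue_morse (Suc (2 * m))"
  using thue_morse_le_1[of m] by (simp; arith)

text \<open>Among three consecutive positions there is a pair 2m, 2m+1, whose letters differ.\<close>
lemma thue_morse_no_cube: "\<not> (thue_morse j = thue_morse (j + 1) \<and> thue_morse (j + 1) = thue_morse (j + 2))"
proof -
  obtain m where "j = 2 * m \<or> j + 1 = 2 * m"
    by (metis dvd_def even_add odd_one)
  then show ?thesis
    using thue_morse_double_neq[of m] by auto
qed

lemma length_mu [simp]: "length (mu w) = 2 * length w"
  by (induction w) (simp_all add: mu_def)

lemma mu_Cons: "mu (a # w) = mu_letter a @ mu w"
  by (simp add: mu_def)

lemma nth_mu:
  assumes "set w \<subseteq> {0, 1}" "p < 2 * length w"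
  shows "mu w ! p = (if even p then w ! (p div 2) else 1 - w ! (p div 2))"
  using assms
proof (induction w arbitrary: p)
  case (Cons a w)
  then have mu_a: "mu (a # w) = [a, 1 - a] @ mu w"
    by (auto simp: mu_Cons)
  show ?case
  proof (cases p)
    case (Suc p')
    show ?thesis
    proof (cases p')
      case (Suc q)
      with \<open>p = Suc p'\<close> Cons show ?thesis
        by (simp add: mu_a del: mu_letter.simps)
    qed (simp add: mu_a \<open>p = Suc p'\<close>)
  qed (simp add: mu_a)
qed simp

lemma inj_on_mu_window:
  assumes "r \<le> 1" "0 < n" "2 * m \<le> n + r + 1"
  shows "inj_on (\<lambda>w. take n (drop r (mu w))) {w. set w \<subseteq> {0, 1} \<and> length w = m}"
proof (rule inj_onI, rule nth_equalityI)
  fix u v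
  assume u: "u \<in> {w. set w \<subseteq> {0, 1} \<and> length w = m}" and v: "v \<in> {w. set w \<subseteq> {0, 1} \<and> length w = m}"
    and eq: "take n (drop r (mu u)) = take n (drop r (mu v))"
  then show "length u = length v"
    by simp
  fix j
  assume "j < length u"
  define p where "p = (if j = 0 then r else 2 * j)"
  have "j < m"
    using \<open>j < length u\<close> u by simp
  have p: "p - r < n" "r \<le> p" "p < 2 * m" "p div 2 = j"
    using assms \<open>j < m\<close> by (cases "j = 0"; simp add: p_def)+
  have "take n (drop r (mu u)) ! (p - r) = mu u ! p" "take n (drop r (mu v)) ! (p - r) = mu v ! p"
    using p(1-3) u v by simp_all
  then have "mu u ! p = mu v ! p"
    using eq by simp
  moreover have "u ! j \<in> {0, 1}" "v ! j \<in> {0, 1}"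
    using u v \<open>j < m\<close> by (auto dest!: subsetD intro: nth_mem)
  ultimately show "u ! j = v ! j"
    using nth_mu[of u p] nth_mu[of v p] u v p by (cases "even p") auto
qed

lemma length_tm_factor [simp]: "length (tm_factor i n) = n"
  by (simp add: tm_factor_def)

lemma nth_tm_factor [simp]: "p < n \<Longrightarrow> tm_factor i n ! p = thue_morse (i + p)"
  by (simp add: tm_factor_def)

lemma hd_tm_factor: "0 < n \<Longrightarrow> hd (tm_factor i n) = thue_morse i"
  by (simp add: tm_factor_def hd_map)

lemma last_tm_factor: "0 < n \<Longrightarrow> last (tm_factor i n) = thue_morse (i + n - 1)"
  by (simp add: tm_factor_def last_map)

lemma set_tm_factor: "set (tm_factor i n) \<subseteq> {0, 1}"
proof -
  have "thue_morse k \<in> {0, 1}" for k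
    using thue_morse_le_1[of k] by auto
  then show ?thesis
    unfolding tm_factor_def set_map by (rule image_subsetI)
qed

lemma mu_tm_factor: "mu (tm_factor i n) = tm_factor (2 * i) (2 * n)"
proof (induction n)
  case (Suc n)
  have "tm_factor i (Suc n) = tm_factor i n @ [thue_morse (i + n)]"
    "tm_factor (2 * i) (2 * Suc n) = tm_factor (2 * i) (2 * n) @ [thue_morse (2 * (i + n)), thue_morse (Suc (2 * (i + n)))]"
    by (simp_all add: tm_factor_def)
  moreover have "thue_morse (2 * i + 2 * n) = thue_morse (i + n)"
    "thue_morse (Suc (2 * i + 2 * n)) = 1 - thue_morse (i + n)"
    using thue_morse_double[of "i + n"] thue_morse_Suc_double[of "i + n"] by (simp_all add: distrib_left)
  ultimately show ?case
    using Suc thue_morse_le_1[of "i + n"] by (auto simp: mu_def)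
qed (simp add: mu_def tm_factor_def)

lemma tm_factor_window:
  "r + n \<le> 2 * m \<Longrightarrow> tm_factor (2 * i + r) n = take n (drop r (mu (tm_factor i m)))"
  unfolding mu_tm_factor by (simp add: tm_factor_def drop_map take_map)

lemma inj_on_mu_window_tm_factors:
  assumes "r \<le> 1" "0 < n" "2 * m \<le> n + r + 1"
  shows "inj_on (\<lambda>w. take n (drop r (mu w))) (tm_factors m)"
proof (rule inj_on_subset[OF inj_on_mu_window[OF assms]])
  show "tm_factors m \<subseteq> {w. set w \<subseteq> {0, 1} \<and> length w = m}"
    using set_tm_factor by (auto simp: tm_factors_def)
qed

lemma tm_factor_even_neq_odd:
  assumes "4 \<le> n"
  shows "tm_factor (2 * i) n \<noteq> tm_factor (2 * j + 1) n"
proof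
  assume eq: "tm_factor (2 * i) n = tm_factor (2 * j + 1) n"
  have letter: "thue_morse (2 * i + p) = thue_morse (2 * j + 1 + p)" if "p < 4" for p
    using arg_cong[OF eq, of "\<lambda>w. w ! p"] that assms by simp
  have "thue_morse (Suc (2 * j)) \<noteq> thue_morse (2 * (j + 1))"
    "thue_morse (Suc (2 * (j + 1))) \<noteq> thue_morse (2 * (j + 2))"
    using letter[of 0] letter[of 1] letter[of 2] letter[of 3]
      thue_morse_double_neq[of i] thue_morse_double_neq[of "i + 1"]
    by (simp_all add: algebra_simps eval_nat_numeral)
  then have "1 - thue_morse j \<noteq> thue_morse (j + 1)" "1 - thue_morse (j + 1) \<noteq> thue_morse (j + 2)"
    by (simp_all only: thue_morse_double thue_morse_Suc_double not_False_eq_True)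
  then have "thue_morse j = thue_morse (j + 1)" "thue_morse (j + 1) = thue_morse (j + 2)"
    using thue_morse_le_1[of j] thue_morse_le_1[of "j + 1"] thue_morse_le_1[of "j + 2"] by arith+
  then show False
    using thue_morse_no_cube[of j] by simp
qed

lemma tm_factor_window_ends:
  assumes "r \<le> 1" "0 < n" "n + r \<le> 2 * m" "2 * m \<le> n + r + 1"
  shows "(hd (tm_factor (2 * i + r) n) = last (tm_factor (2 * i + r) n))
    \<longleftrightarrow> (hd (tm_factor i m) = last (tm_factor i m)) \<noteq> even n"
proof -
  define a b where "a = thue_morse i" and "b = thue_morse (i + m - 1)"
  have ends: "hd (tm_factor i m) = a" "last (tm_factor i m) = b"
    using assms by (simp_all add: a_def b_def hd_tm_factor last_tm_factor)
  have hd_window: "hd (tm_factor (2 * i + r) n) = (if r = 0 then a else 1 - a)"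
    using assms by (cases r) (auto simp: a_def hd_tm_factor)
  have last_window: "last (tm_factor (2 * i + r) n) = (if n + r = 2 * m then 1 - b else b)"
  proof (cases "n + r = 2 * m")
    case True
    then have "2 * i + r + n - 1 = Suc (2 * (i + m - 1))"
      using assms by simp
    then show ?thesis
      using True assms by (simp add: b_def last_tm_factor)
  next
    case False
    then have "2 * i + r + n - 1 = 2 * (i + m - 1)"
      using assms by simp
    then show ?thesis
      using False assms by (simp add: b_def last_tm_factor)
  qed
  have parity: "n + r = 2 * m \<longleftrightarrow> (even n \<longleftrightarrow> r = 0)"
    using assms by presburger
  have "a = 0 \<or> a = 1" "b = 0 \<or> b = 1"
    using thue_morse_le_1[of i] thue_morse_le_1[of "i + m - 1"] unfolding a_def b_def by arith+
  then show ?thesis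
    unfolding ends hd_window last_window parity by (cases "r = 0"; cases "even n") auto
qed

definition tm_factors_by_ends :: "bool \<Rightarrow> nat \<Rightarrow> nat list set" where
  "tm_factors_by_ends c n = {w \<in> tm_factors n. (hd w = last w) = c}"

lemma tm_factor_in_tm_factors_by_ends:
  "0 < n \<Longrightarrow> tm_factor i n \<in> tm_factors_by_ends c n \<longleftrightarrow> (thue_morse i = thue_morse (i + (n - 1))) = c"
  by (auto simp: tm_factors_by_ends_def tm_factors_def hd_tm_factor last_tm_factor)

lemma finite_tm_factors_by_ends: "finite (tm_factors_by_ends c n)"
proof (rule finite_subset)
  show "tm_factors_by_ends c n \<subseteq> {w. set w \<subseteq> {0, 1} \<and> length w = n}"
    using set_tm_factor by (auto simp: tm_factors_by_ends_def tm_factors_def)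
qed (simp add: finite_lists_length_eq)

lemma card_tm_factors_by_ends_small:
  assumes "n = 2 \<or> n = 3"
  shows "n - 1 \<le> card (tm_factors_by_ends c n)"
  using assms
proof
  assume "n = 2"
  have "tm_factor (if c then 5 else 2) 2 \<in> tm_factors_by_ends c 2"
    by (cases c) (simp_all add: tm_factor_in_tm_factors_by_ends thue_morse_small)
  then have "0 < card (tm_factors_by_ends c 2)"
    using finite_tm_factors_by_ends card_gt_0_iff by blast
  then show ?thesis
    using \<open>n = 2\<close> by simp
next
  assume "n = 3"
  define i where "i = (if c then 2 else 4 :: nat)"
  have sub: "{tm_factor i 3, tm_factor (i + 1) 3} \<subseteq> tm_factors_by_ends c 3"
    by (cases c) (simp_all add: i_def tm_factor_in_tm_factors_by_ends thue_morse_small)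
  have "hd (tm_factor i 3) \<noteq> hd (tm_factor (i + 1) 3)"
    by (cases c) (simp_all add: i_def hd_tm_factor thue_morse_small)
  then have "tm_factor i 3 \<noteq> tm_factor (i + 1) 3"
    by metis
  then have "2 = card {tm_factor i 3, tm_factor (i + 1) 3}"
    by simp
  also have "\<dots> \<le> card (tm_factors_by_ends c 3)"
    using finite_tm_factors_by_ends sub by (rule card_mono)
  finally show ?thesis
    using \<open>n = 3\<close> by simp
qed

lemma mu_window_in_tm_factors_by_ends:
  assumes "r \<le> 1" "0 < n" "n + r \<le> 2 * m" "2 * m \<le> n + r + 1"
    and "w \<in> tm_factors_by_ends (c \<noteq> even n) m"
  shows "take n (drop r (mu w)) \<in> tm_factors_by_ends c n"
proof -
  obtain i where w: "w = tm_factor i m" and ends: "(hd w = last w) = (c \<noteq> even n)"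
    using assms(5) by (auto simp: tm_factors_by_ends_def tm_factors_def)
  have "take n (drop r (mu w)) = tm_factor (2 * i + r) n"
    using tm_factor_window[of r n m i] assms(3) w by simp
  with tm_factor_window_ends[OF assms(1-4), of i] show ?thesis
    using w ends by (auto simp: tm_factors_by_ends_def tm_factors_def)
qed

lemma mu_windows_disjoint:
  assumes "4 \<le> n" "n \<le> 2 * m" "n + 1 \<le> 2 * m'" "u \<in> tm_factors m" "v \<in> tm_factors m'"
  shows "take n (mu u) \<noteq> take n (drop 1 (mu v))"
proof -
  obtain i j where "u = tm_factor i m" "v = tm_factor j m'"
    using assms(4,5) by (auto simp: tm_factors_def)
  then have "take n (mu u) = tm_factor (2 * i) n" "take n (drop 1 (mu v)) = tm_factor (2 * j + 1) n"
    using tm_factor_window[of 0 n m i] tm_factor_window[of 1 n m' j] assms(2,3) by simp_all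
  then show ?thesis
    using tm_factor_even_neq_odd[OF assms(1)] by simp
qed

lemma card_tm_factors_by_ends_halves:
  assumes "4 \<le> n"
  shows "card (tm_factors_by_ends (c \<noteq> even n) ((n + 1) div 2))
    + card (tm_factors_by_ends (c \<noteq> even n) ((n + 2) div 2)) \<le> card (tm_factors_by_ends c n)"
proof -
  define m where "m r = (n + r + 1) div 2" for r :: nat
  have m: "n + r \<le> 2 * m r" "2 * m r \<le> n + r + 1" for r
    using div_mult_mod_eq[of "n + r + 1" 2] mod_less_divisor[of 2 "n + r + 1"] unfolding m_def by linarith+
  define S where "S r = tm_factors_by_ends (c \<noteq> even n) (m r)" for r
  define window where "window r w = take n (drop r (mu w))" for r w
  have S_sub: "S r \<subseteq> tm_factors (m r)" for r
    by (auto simp: S_def tm_factors_by_ends_def)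
  have "0 < n"
    using assms by simp
  have inj: "inj_on (window r) (S r)" if "r \<le> 1" for r
    using inj_on_subset[OF inj_on_mu_window_tm_factors[OF that \<open>0 < n\<close> m(2)] S_sub]
    unfolding window_def[abs_def] .
  have into: "window r ` S r \<subseteq> tm_factors_by_ends c n" if "r \<le> 1" for r
    using mu_window_in_tm_factors_by_ends[OF that \<open>0 < n\<close> m] by (auto simp: window_def S_def)
  have "window 0 ` S 0 \<inter> window 1 ` S 1 = {}"
    using mu_windows_disjoint[OF assms, of "m 0" "m 1"] m(1)[of 0] m(1)[of 1] S_sub[of 0] S_sub[of 1]
    by (fastforce simp: window_def)
  then have "card (S 0) + card (S 1) \<le> card (tm_factors_by_ends c n)"
    using card_le_of_disjoint_images[OF finite_tm_factors_by_ends inj[of 0] inj[of 1]] into[of 0] into[of 1]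
    by simp
  then show ?thesis
    by (simp add: S_def m_def)
qed

lemma card_tm_factors_by_ends_ge:
  "2 \<le> n \<Longrightarrow> n - 1 \<le> card (tm_factors_by_ends c n)"
proof (induction n arbitrary: c rule: less_induct)
  case (less n)
  show ?case
  proof (cases "n \<le> 3")
    case True
    with less.prems have "n = 2 \<or> n = 3"
      by linarith
    then show ?thesis
      by (rule card_tm_factors_by_ends_small)
  next
    case False
    then have halves: "2 \<le> (n + 1) div 2" "(n + 1) div 2 \<le> (n + 2) div 2" "(n + 2) div 2 < n"
      "(n + 1) div 2 + (n + 2) div 2 = n + 1"
      by (cases "even n"; auto elim!: evenE oddE)+
    have "(n + 1) div 2 - 1 \<le> card (tm_factors_by_ends (c \<noteq> even n) ((n + 1) div 2))"
      "(n + 2) div 2 - 1 \<le> card (tm_factors_by_ends (c \<noteq> even n) ((n + 2) div 2))"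
      using less.IH[of "(n + 1) div 2"] less.IH[of "(n + 2) div 2"] halves by simp_all
    then show ?thesis
      using card_tm_factors_by_ends_halves[of n c] False halves by linarith
  qed
qed

theorem corollary1:
  fixes n :: nat
  assumes "n \<ge> 2"
  shows "f_aa n \<ge> n - 1 \<and> f_ab n \<ge> n - 1"
proof -
  have "f_aa n = card (tm_factors_by_ends True n)" "f_ab n = card (tm_factors_by_ends False n)"
    by (simp_all add: f_aa_def f_ab_def tm_factors_by_ends_def)
  then show ?thesis
    using card_tm_factors_by_ends_ge[OF assms] by simp
qed

end
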